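(* Let $\beta,\delta\in(0,1)$, $K>0$, and let $\eta_1,\eta_2\ge0$ be constants. Consider $$\frac{df}{dt}=\tfrac12 fm\beta L-\delta f-\eta_1 f,\qquad \frac{dm}{dt}=\tfrac12 fm\beta L-\delta m-\eta_2 m,\qquad L=1-\frac{f+m}{K}.$$ If $\beta K<2\delta+\eta_1+\eta_2$, then the trivial equilibrium $(0,0)$ is globally asymptotically stable.
   Context: $f,m$ are female and male densities, and $\eta_1,\eta_2$ are the female and male harvesting rates (the "female harvesting male harvesting" model). *)

theory Defs
  imports "HOL-Analysis.Analysis"
begin

definition fhmh_L :: "real \<Rightarrow> real \<Rightarrow> real \<Rightarrow> real" where
  "fhmh_L K x y = 1 - (x + y) / K"

definition fhmh_rhs_f :: "real \<Rightarrow> real \<Rightarrow> real \<Rightarrow> real \<Rightarrow> real \<Rightarrow> real \<Rightarrow> real \<Rightarrow> real" where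
  "fhmh_rhs_f \<beta> \<delta> K \<eta>1 \<eta>2 x y = (1/2) * x * y * \<beta> * fhmh_L K x y - \<delta> * x - \<eta>1 * x"

definition fhmh_rhs_m :: "real \<Rightarrow> real \<Rightarrow> real \<Rightarrow> real \<Rightarrow> real \<Rightarrow> real \<Rightarrow> real \<Rightarrow> real" where
  "fhmh_rhs_m \<beta> \<delta> K \<eta>1 \<eta>2 x y = (1/2) * x * y * \<beta> * fhmh_L K x y - \<delta> * y - \<eta>2 * y"

definition fhmh_solution ::
  "real \<Rightarrow> real \<Rightarrow> real \<Rightarrow> real \<Rightarrow> real \<Rightarrow> (real \<Rightarrow> real) \<Rightarrow> (real \<Rightarrow> real) \<Rightarrow> bool" where
  "fhmh_solution \<beta> \<delta> K \<eta>1 \<eta>2 f m \<longleftrightarrow>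
     (\<forall>t\<ge>0. (f has_real_derivative fhmh_rhs_f \<beta> \<delta> K \<eta>1 \<eta>2 (f t) (m t)) (at t within {0..})
          \<and> (m has_real_derivative fhmh_rhs_m \<beta> \<delta> K \<eta>1 \<eta>2 (f t) (m t)) (at t within {0..}))"

text \<open>Global asymptotic stability of (0,0) on the biologically relevant state space
  (the closed nonnegative quadrant): Lyapunov stability plus global attractivity.\<close>
definition fhmh_origin_GAS :: "real \<Rightarrow> real \<Rightarrow> real \<Rightarrow> real \<Rightarrow> real \<Rightarrow> bool" where
  "fhmh_origin_GAS \<beta> \<delta> K \<eta>1 \<eta>2 \<longleftrightarrow>
     (\<forall>\<epsilon>>0. \<exists>d>0. \<forall>f m. fhmh_solution \<beta> \<delta> K \<eta>1 \<eta>2 f m \<and> f 0 \<ge> 0 \<and> m 0 \<ge> 0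
          \<and> norm (f 0, m 0) < d \<longrightarrow> (\<forall>t\<ge>0. norm (f t, m t) < \<epsilon>))
   \<and> (\<forall>f m. fhmh_solution \<beta> \<delta> K \<eta>1 \<eta>2 f m \<and> f 0 \<ge> 0 \<and> m 0 \<ge> 0
          \<longrightarrow> ((\<lambda>t. (f t, m t)) \<longlongrightarrow> (0, 0)) at_top)"

end

theory Submission
  imports Defs
begin

text \<open>The total population V = f + m is a Lyapunov function. On the nonnegative quadrant,
  which solutions never leave, f L and m L are at most K/4, so the mating term f m \<beta> L is at most
  \<beta> K/4 \<cdot> min f m; under \<beta> K < 2\<delta> + \<eta>1 + \<eta>2 this is dominated by a quarter of the total loss
  (\<delta> + \<eta>1) f + (\<delta> + \<eta>2) m. Hence V' \<le> -(3\<delta>/4) V, and the exponential decay of V gives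
  both Lyapunov stability and global attractivity of the origin.\<close>

lemma DERIV_le_linear_imp_le_exp:
  fixes u u' :: "real \<Rightarrow> real" and a b c :: real
  assumes "a \<le> b" and cont: "continuous_on {a..b} u"
    and der: "\<And>t. a < t \<Longrightarrow> t < b \<Longrightarrow> (u has_real_derivative u' t) (at t)"
    and le: "\<And>t. a < t \<Longrightarrow> t < b \<Longrightarrow> u' t \<le> c * u t"
  shows "u b \<le> u a * exp (c * (b - a))"
proof -
  define h where "h s = u s * exp (- c * (s - a))" for s
  have "h b \<le> h a"
  proof (rule DERIV_nonpos_imp_decreasing_open[OF \<open>a \<le> b\<close>])
    show "continuous_on {a..b} h"
      unfolding h_def using cont by (intro continuous_intros)
    fix t assume t: "a < t" "t < b"
    have "(h has_real_derivative (u' t - c * u t) * exp (- c * (t - a))) (at t)"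
      unfolding h_def using der[OF t]
      by (auto intro!: derivative_eq_intros simp: algebra_simps)
    moreover have "(u' t - c * u t) * exp (- c * (t - a)) \<le> 0"
      using le[OF t] by (simp add: mult_nonpos_nonneg)
    ultimately show "\<exists>y. (h has_real_derivative y) (at t) \<and> y \<le> 0" by blast
  qed
  then have "u b * exp (- c * (b - a)) * exp (c * (b - a)) \<le> u a * exp (c * (b - a))"
    by (simp add: h_def)
  then show ?thesis
    by (simp add: mult.assoc flip: exp_add)
qed

text \<open>Were x t < 0, then after the last time s0 \<le> t with x s0 \<ge> 0 the function -x is positive
  with (-x)' \<le> M (-x) for an upper bound M of g on [0, t], so Gronwall gives -x t \<le> -x s0 \<cdot> exp \<dots> \<le> 0.\<close>
lemma nonneg_of_linear_DERIV:
  fixes x g :: "real \<Rightarrow> real" and t :: real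
  assumes cx: "continuous_on {0..} x" and cg: "continuous_on {0..} g"
    and der: "\<And>s. 0 < s \<Longrightarrow> (x has_real_derivative x s * g s) (at s)"
    and "0 \<le> x 0" and "0 \<le> t"
  shows "0 \<le> x t"
proof (rule ccontr)
  assume neg: "\<not> 0 \<le> x t"
  have cx_t: "continuous_on {0..t} x" using cx by (rule continuous_on_subset) auto
  obtain M where M: "\<And>s. s \<in> {0..t} \<Longrightarrow> g s \<le> M"
    using continuous_attains_sup[of "{0..t}" g] cg \<open>0 \<le> t\<close>
    by (metis atLeastAtMost_iff atLeast_iff compact_Icc continuous_on_subset empty_iff subsetI)
  define A where "A = {s \<in> {0..t}. 0 \<le> x s}"
  have "closed A"
    unfolding A_def by (intro continuous_on_closed_Collect_le cx_t continuous_on_const) auto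
  moreover have "0 \<in> A" using assms by (simp add: A_def)
  moreover have "bdd_above A" by (auto simp: A_def intro: bdd_aboveI[of _ t])
  ultimately have "Sup A \<in> A" using closed_contains_Sup by blast
  define s0 where "s0 = Sup A"
  have s0: "0 \<le> s0" "s0 \<le> t" "0 \<le> x s0"
    using \<open>Sup A \<in> A\<close> by (auto simp: A_def s0_def)
  have after_s0: "x s < 0" if "s0 < s" "s \<le> t" for s
    using cSup_upper[OF _ \<open>bdd_above A\<close>, of s] that s0 by (force simp: A_def s0_def)
  have "- x t \<le> - x s0 * exp (M * (t - s0))"
  proof (rule DERIV_le_linear_imp_le_exp[where u' = "\<lambda>s. - (x s * g s)"])
    show "continuous_on {s0..t} (\<lambda>s. - x s)"
      using cx_t s0 by (intro continuous_intros) (auto intro: continuous_on_subset)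
    fix s assume s: "s0 < s" "s < t"
    show "((\<lambda>s. - x s) has_real_derivative - (x s * g s)) (at s)"
      using der[of s] s s0 by (auto intro: DERIV_minus)
    have "g s \<le> M" using M s s0 by auto
    then show "- (x s * g s) \<le> M * - x s"
      using after_s0[of s] s by (simp add: mult_le_cancel_left_neg mult.commute)
  qed (use s0 in simp)
  moreover have "- x s0 * exp (M * (t - s0)) \<le> 0"
    using s0 by (simp add: mult_nonpos_nonneg)
  ultimately show False using neg by linarith
qed

lemma fhmh_solution_continuous:
  assumes "fhmh_solution \<beta> \<delta> K \<eta>1 \<eta>2 f m"
  shows "continuous_on {0..} f" "continuous_on {0..} m"
  using assms DERIV_continuous
  unfolding fhmh_solution_def continuous_on_eq_continuous_within by blast+

lemma fhmh_solution_DERIV: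
  assumes "fhmh_solution \<beta> \<delta> K \<eta>1 \<eta>2 f m" and "0 < t"
  shows "(f has_real_derivative fhmh_rhs_f \<beta> \<delta> K \<eta>1 \<eta>2 (f t) (m t)) (at t)"
    and "(m has_real_derivative fhmh_rhs_m \<beta> \<delta> K \<eta>1 \<eta>2 (f t) (m t)) (at t)"
proof -
  have "at t within {0..} = at t"
    using \<open>0 < t\<close> by (intro at_within_interior) simp
  moreover have "(f has_real_derivative fhmh_rhs_f \<beta> \<delta> K \<eta>1 \<eta>2 (f t) (m t)) (at t within {0..})"
    and "(m has_real_derivative fhmh_rhs_m \<beta> \<delta> K \<eta>1 \<eta>2 (f t) (m t)) (at t within {0..})"
    using assms unfolding fhmh_solution_def by auto
  ultimately show "(f has_real_derivative fhmh_rhs_f \<beta> \<delta> K \<eta>1 \<eta>2 (f t) (m t)) (at t)"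
    and "(m has_real_derivative fhmh_rhs_m \<beta> \<delta> K \<eta>1 \<eta>2 (f t) (m t)) (at t)"
    by simp_all
qed

lemma fhmh_solution_nonneg:
  assumes sol: "fhmh_solution \<beta> \<delta> K \<eta>1 \<eta>2 f m"
    and "0 \<le> f 0" "0 \<le> m 0" "0 \<le> t"
  shows "0 \<le> f t" "0 \<le> m t"
proof -
  note cont = fhmh_solution_continuous[OF sol]
  note der = fhmh_solution_DERIV[OF sol]
  show "0 \<le> f t"
  proof (rule nonneg_of_linear_DERIV[OF cont(1),
      where g = "\<lambda>s. 1/2 * m s * \<beta> * fhmh_L K (f s) (m s) - \<delta> - \<eta>1"])
    show "continuous_on {0..} (\<lambda>s. 1/2 * m s * \<beta> * fhmh_L K (f s) (m s) - \<delta> - \<eta>1)"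
      unfolding fhmh_L_def divide_inverse using cont by (intro continuous_intros)
    fix s :: real assume "0 < s"
    then show "(f has_real_derivative f s * (1/2 * m s * \<beta> * fhmh_L K (f s) (m s) - \<delta> - \<eta>1)) (at s)"
      using der(1) by (simp add: fhmh_rhs_f_def algebra_simps)
  qed (use assms in auto)
  show "0 \<le> m t"
  proof (rule nonneg_of_linear_DERIV[OF cont(2),
      where g = "\<lambda>s. 1/2 * f s * \<beta> * fhmh_L K (f s) (m s) - \<delta> - \<eta>2"])
    show "continuous_on {0..} (\<lambda>s. 1/2 * f s * \<beta> * fhmh_L K (f s) (m s) - \<delta> - \<eta>2)"
      unfolding fhmh_L_def divide_inverse using cont by (intro continuous_intros)
    fix s :: real assume "0 < s"
    then show "(m has_real_derivative m s * (1/2 * f s * \<beta> * fhmh_L K (f s) (m s) - \<delta> - \<eta>2)) (at s)"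
      using der(2) by (simp add: fhmh_rhs_m_def algebra_simps)
  qed (use assms in auto)
qed

lemma fhmh_L_commute: "fhmh_L K x y = fhmh_L K y x"
  by (simp add: fhmh_L_def add.commute)

lemma mult_fhmh_L_le:
  fixes x y K :: real
  assumes "0 \<le> x" "0 \<le> y" "0 < K"
  shows "x * fhmh_L K x y \<le> K / 4"
proof -
  have "x * fhmh_L K x y \<le> x * (1 - x / K)"
    unfolding fhmh_L_def using assms by (intro mult_left_mono) (auto simp: field_simps)
  also have "\<dots> = K / 4 - (x - K / 2)\<^sup>2 / K"
    using assms by (simp add: field_simps power2_eq_square)
  also have "\<dots> \<le> K / 4"
    using assms by simp
  finally show ?thesis .
qed

lemma fhmh_mating_le_min:
  fixes x y \<beta> K :: real
  assumes "0 \<le> x" "0 \<le> y" "0 \<le> \<beta>" "0 < K"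
  shows "x * y * \<beta> * fhmh_L K x y \<le> \<beta> * K / 4 * min x y"
proof -
  have "\<beta> * y * (x * fhmh_L K x y) \<le> \<beta> * y * (K / 4)"
    using assms by (intro mult_left_mono mult_fhmh_L_le) auto
  moreover have "\<beta> * x * (y * fhmh_L K y x) \<le> \<beta> * x * (K / 4)"
    using assms by (intro mult_left_mono mult_fhmh_L_le) auto
  ultimately show ?thesis
    by (simp add: min_def fhmh_L_commute[of K y x] algebra_simps)
qed

lemma fhmh_rhs_sum_le:
  fixes x y \<beta> \<delta> K \<eta>1 \<eta>2 :: real
  assumes "0 \<le> x" "0 \<le> y" "0 \<le> \<beta>" "0 \<le> \<delta>" "0 < K" "0 \<le> \<eta>1" "0 \<le> \<eta>2"
    and "\<beta> * K \<le> 2 * \<delta> + \<eta>1 + \<eta>2"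
  shows "fhmh_rhs_f \<beta> \<delta> K \<eta>1 \<eta>2 x y + fhmh_rhs_m \<beta> \<delta> K \<eta>1 \<eta>2 x y \<le> - (3 * \<delta> / 4) * (x + y)"
proof -
  define W where "W = (\<delta> + \<eta>1) * x + (\<delta> + \<eta>2) * y"
  have "x * y * \<beta> * fhmh_L K x y \<le> \<beta> * K / 4 * min x y"
    using assms by (intro fhmh_mating_le_min)
  also have "\<dots> \<le> (2 * \<delta> + \<eta>1 + \<eta>2) / 4 * min x y"
    using assms by (intro mult_right_mono) auto
  also have "\<dots> = ((\<delta> + \<eta>1) * min x y + (\<delta> + \<eta>2) * min x y) / 4"
    by (simp add: algebra_simps)
  also have "\<dots> \<le> W / 4"
    unfolding W_def using assms by (intro divide_right_mono add_mono mult_left_mono) auto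
  finally have mating: "x * y * \<beta> * fhmh_L K x y \<le> W / 4" .
  have "fhmh_rhs_f \<beta> \<delta> K \<eta>1 \<eta>2 x y + fhmh_rhs_m \<beta> \<delta> K \<eta>1 \<eta>2 x y
      = x * y * \<beta> * fhmh_L K x y - W"
    unfolding fhmh_rhs_f_def fhmh_rhs_m_def W_def by (simp add: algebra_simps)
  also have "\<dots> \<le> - (3 / 4) * W"
    using mating by simp
  also have "\<dots> \<le> - (3 * \<delta> / 4) * (x + y)"
    unfolding W_def using assms by (simp add: algebra_simps)
  finally show ?thesis .
qed

lemma fhmh_solution_sum_decay:
  fixes \<beta> \<delta> K \<eta>1 \<eta>2 :: real
  assumes "0 \<le> \<beta>" "0 \<le> \<delta>" "0 < K" "0 \<le> \<eta>1" "0 \<le> \<eta>2"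
    and "\<beta> * K \<le> 2 * \<delta> + \<eta>1 + \<eta>2"
    and sol: "fhmh_solution \<beta> \<delta> K \<eta>1 \<eta>2 f m" and "0 \<le> f 0" "0 \<le> m 0" "0 \<le> t"
  shows "f t + m t \<le> (f 0 + m 0) * exp (- (3 * \<delta> / 4) * t)"
proof -
  note cont = fhmh_solution_continuous[OF sol]
  have "f t + m t \<le> (f 0 + m 0) * exp (- (3 * \<delta> / 4) * (t - 0))"
  proof (rule DERIV_le_linear_imp_le_exp
      [where u' = "\<lambda>s. fhmh_rhs_f \<beta> \<delta> K \<eta>1 \<eta>2 (f s) (m s) + fhmh_rhs_m \<beta> \<delta> K \<eta>1 \<eta>2 (f s) (m s)"])
    show "continuous_on {0..t} (\<lambda>s. f s + m s)"
      using cont by (intro continuous_intros) (auto intro: continuous_on_subset)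
    fix s assume s: "0 < s" "s < t"
    show "((\<lambda>s. f s + m s) has_real_derivative
        fhmh_rhs_f \<beta> \<delta> K \<eta>1 \<eta>2 (f s) (m s) + fhmh_rhs_m \<beta> \<delta> K \<eta>1 \<eta>2 (f s) (m s)) (at s)"
      using fhmh_solution_DERIV[OF sol] s by (intro DERIV_add) auto
    show "fhmh_rhs_f \<beta> \<delta> K \<eta>1 \<eta>2 (f s) (m s) + fhmh_rhs_m \<beta> \<delta> K \<eta>1 \<eta>2 (f s) (m s)
        \<le> - (3 * \<delta> / 4) * (f s + m s)"
      using assms fhmh_solution_nonneg[OF sol] s by (intro fhmh_rhs_sum_le) auto
  qed (use \<open>0 \<le> t\<close> in simp)
  then show ?thesis by simp
qed

lemma fhmh_solution_norm_decay:
  fixes \<beta> \<delta> K \<eta>1 \<eta>2 :: real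
  assumes "0 \<le> \<beta>" "0 \<le> \<delta>" "0 < K" "0 \<le> \<eta>1" "0 \<le> \<eta>2"
    and "\<beta> * K \<le> 2 * \<delta> + \<eta>1 + \<eta>2"
    and sol: "fhmh_solution \<beta> \<delta> K \<eta>1 \<eta>2 f m" and "0 \<le> f 0" "0 \<le> m 0" "0 \<le> t"
  shows "norm (f t, m t) \<le> 2 * norm (f 0, m 0) * exp (- (3 * \<delta> / 4) * t)"
proof -
  have "norm (f t, m t) \<le> norm (f t) + norm (m t)"
    by (rule norm_Pair_le)
  also have "\<dots> = f t + m t"
    using fhmh_solution_nonneg[OF sol \<open>0 \<le> f 0\<close> \<open>0 \<le> m 0\<close> \<open>0 \<le> t\<close>] by simp
  also have "\<dots> \<le> (f 0 + m 0) * exp (- (3 * \<delta> / 4) * t)"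
    by (rule fhmh_solution_sum_decay) fact+
  also have "\<dots> \<le> 2 * norm (f 0, m 0) * exp (- (3 * \<delta> / 4) * t)"
    using norm_fst_le[of "f 0" "m 0"] norm_snd_le[of "m 0" "f 0"] by (intro mult_right_mono) auto
  finally show ?thesis .
qed

lemma norm_le_exp_decay_imp_tendsto_zero:
  fixes x :: "real \<Rightarrow> 'a::real_normed_vector" and C k :: real
  assumes "0 < k" and "\<And>t. 0 \<le> t \<Longrightarrow> norm (x t) \<le> C * exp (- k * t)"
  shows "(x \<longlongrightarrow> 0) at_top"
proof (rule Lim_null_comparison)
  show "\<forall>\<^sub>F t in at_top. norm (x t) \<le> C * exp (- k * t)"
    using assms(2) by (intro eventually_at_top_linorderI[of 0])
  have "filterlim (\<lambda>t. - k * t) at_bot at_top"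
    by (rule filterlim_tendsto_neg_mult_at_bot[OF tendsto_const _ filterlim_ident])
      (use \<open>0 < k\<close> in simp)
  then have "((\<lambda>t. exp (- k * t)) \<longlongrightarrow> 0) at_top"
    by (rule filterlim_compose[OF exp_at_bot])
  then show "((\<lambda>t. C * exp (- k * t)) \<longlongrightarrow> 0) at_top"
    by (rule tendsto_mult_right_zero)
qed

theorem mainTheorem7:
  fixes \<beta> \<delta> K \<eta>1 \<eta>2 :: real
  assumes "0 < \<beta>" "\<beta> < 1" "0 < \<delta>" "\<delta> < 1" "0 < K" "0 \<le> \<eta>1" "0 \<le> \<eta>2"
    and "\<beta> * K < 2 * \<delta> + \<eta>1 + \<eta>2"
  shows "fhmh_origin_GAS \<beta> \<delta> K \<eta>1 \<eta>2"
proof -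
  have decay: "norm (f t, m t) \<le> 2 * norm (f 0, m 0) * exp (- (3 * \<delta> / 4) * t)"
    if "fhmh_solution \<beta> \<delta> K \<eta>1 \<eta>2 f m" "0 \<le> f 0" "0 \<le> m 0" "0 \<le> t" for f m t
    using assms that by (intro fhmh_solution_norm_decay) auto
  have stable: "norm (f t, m t) < \<epsilon>"
    if "fhmh_solution \<beta> \<delta> K \<eta>1 \<eta>2 f m" "0 \<le> f 0" "0 \<le> m 0" "0 \<le> t"
      and "norm (f 0, m 0) < \<epsilon> / 2" for f m t \<epsilon>
  proof -
    have "exp (- (3 * \<delta> / 4) * t) \<le> 1"
      using \<open>0 < \<delta>\<close> \<open>0 \<le> t\<close> by simp
    then have "2 * norm (f 0, m 0) * exp (- (3 * \<delta> / 4) * t) \<le> 2 * norm (f 0, m 0)"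
      by (intro mult_left_le) auto
    with decay[OF that(1-4)] that(5) show ?thesis by linarith
  qed
  have attractive: "((\<lambda>t. (f t, m t)) \<longlongrightarrow> 0) at_top"
    if "fhmh_solution \<beta> \<delta> K \<eta>1 \<eta>2 f m" "0 \<le> f 0" "0 \<le> m 0" for f m
    by (rule norm_le_exp_decay_imp_tendsto_zero[where k = "3 * \<delta> / 4"])
      (use \<open>0 < \<delta>\<close> decay[OF that] in auto)
  show ?thesis
    unfolding fhmh_origin_GAS_def zero_prod_def[symmetric]
  proof (intro conjI allI impI)
    fix \<epsilon> :: real assume "0 < \<epsilon>"
    then show "\<exists>d>0. \<forall>f m. fhmh_solution \<beta> \<delta> K \<eta>1 \<eta>2 f m \<and> 0 \<le> f 0 \<and> 0 \<le> m 0
        \<and> norm (f 0, m 0) < d \<longrightarrow> (\<forall>t\<ge>0. norm (f t, m t) < \<epsilon>)"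
      using stable by (intro exI[of _ "\<epsilon> / 2"]) auto
  qed (use attractive in auto)
qed

end
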